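(* Let $\mathcal G=(\mathcal V,\mathcal E)$ be a $k$-uniform hypergraph with $|\mathcal V|=n$, $|\mathcal E|=m\ge1$, in which every vertex lies in exactly $\Delta$ hyperedges. Let $H=\sum_{\eta\in\mathcal E}H_\eta$ be a local Hamiltonian on $(\mathbb C^d)^{\otimes n}$ with each $H_\eta$ Hermitian, acting only on the qudits in $\eta$, and $\|H_\eta\|\le1$. Let $h=\frac1mH$ and let $\nu_h$ be its empirical spectral distribution. Then \[\operatorname{Var}(\nu_h)=\int t^2\,d\nu_h(t)-\Big(\int t\,d\nu_h(t)\Big)^2\le \frac{4k^2}{n}.\]
   Context: $H_\eta$ stands for $H_\eta\otimes I$. The empirical spectral distribution of a Hermitian operator $A$ on a $D$-dimensional space is $\nu_A=\frac1D\sum_{i=1}^D\delta_{\lambda_i(A)}$, with eigenvalues counted with multiplicity. *)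

theory Defs
  imports "Jordan_Normal_Form.Jordan_Normal_Form" "Jordan_Normal_Form.Schur_Decomposition"
    "HOL-Computational_Algebra.Polynomial" "HOL-Probability.Probability_Mass_Function"
begin

text \<open>The Hilbert space (C^d)^{n-fold tensor} is identified with C^(d^n); basis index
  x < d^n encodes the configuration whose i-th qudit is digit d x i (base-d expansion).\<close>

definition digit :: "nat \<Rightarrow> nat \<Rightarrow> nat \<Rightarrow> nat" where
  "digit d x i = (x div d ^ i) mod d"

text \<open>A (d^n x d^n) matrix A acts only on the qudits in S, i.e. A = B \<otimes> I:
  matrix entries vanish unless row and column agree outside S, and the entries depend
  only on the S-components of row and column.\<close>
definition acts_only_on :: "nat \<Rightarrow> nat \<Rightarrow> nat set \<Rightarrow> complex mat \<Rightarrow> bool" where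
  "acts_only_on d n S A \<longleftrightarrow>
     A \<in> carrier_mat (d ^ n) (d ^ n) \<and>
     (\<forall>x<d ^ n. \<forall>y<d ^ n. (\<exists>i<n. i \<notin> S \<and> digit d x i \<noteq> digit d y i) \<longrightarrow> A $$ (x, y) = 0) \<and>
     (\<forall>x<d ^ n. \<forall>y<d ^ n. \<forall>x'<d ^ n. \<forall>y'<d ^ n.
        (\<forall>i<n. i \<notin> S \<longrightarrow> digit d x i = digit d y i) \<and>
        (\<forall>i<n. i \<notin> S \<longrightarrow> digit d x' i = digit d y' i) \<and>
        (\<forall>i\<in>S. digit d x i = digit d x' i \<and> digit d y i = digit d y' i)
        \<longrightarrow> A $$ (x, y) = A $$ (x', y'))"

definition hermitian_mat :: "complex mat \<Rightarrow> bool" where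
  "hermitian_mat A \<longleftrightarrow> square_mat A \<and> mat_adjoint A = A"

definition vec_norm :: "complex Matrix.vec \<Rightarrow> real" where
  "vec_norm v = sqrt (\<Sum>i<dim_vec v. (cmod (v $ i))\<^sup>2)"

definition op_norm :: "complex mat \<Rightarrow> real" where
  "op_norm A = (SUP v \<in> {v. v \<in> carrier_vec (dim_col A) \<and> vec_norm v \<le> 1}. vec_norm (A *\<^sub>v v))"

definition eigenvalues_mset :: "complex mat \<Rightarrow> complex multiset" where
  "eigenvalues_mset A = proots (char_poly A)"

definition esd :: "complex mat \<Rightarrow> real pmf" where
  "esd A = pmf_of_multiset (image_mset Re (eigenvalues_mset A))"

end

theory Submission
  imports Defs
begin

unbundle no vec_syntax

text \<open>Write \<open>\<tau> = tr/D\<close> for the normalised trace and \<open>h = (1/m) \<Sum>\<^sub>\<eta> H\<^sub>\<eta>\<close>. The first two moments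
  of the spectral distribution are \<open>\<tau>(h)\<close> and \<open>\<tau>(h\<^sup>2)\<close>, so its variance is
  \<open>m\<^sup>-\<^sup>2 \<Sum>\<^sub>\<eta>\<^sub>,\<^sub>\<eta>\<^sub>' (\<tau>(H\<^sub>\<eta>H\<^sub>\<eta>\<^sub>') - \<tau>(H\<^sub>\<eta>)\<tau>(H\<^sub>\<eta>\<^sub>'))\<close>. When \<open>\<eta>\<close> and \<open>\<eta>'\<close> are disjoint the two
  operators act on different tensor factors and \<open>\<tau>\<close> factorises, so the covariance vanishes; every
  other covariance is at most 2 in absolute value. A pair of hyperedges meeting at a vertex can be
  charged to one of the \<open>k\<close> vertices of \<open>\<eta>\<close> and one of the \<open>\<Delta>\<close> edges through it, hence there
  are at most \<open>mk\<Delta>\<close> such pairs and the variance is at most \<open>2k\<Delta>/m = 2k\<^sup>2/n\<close>, using the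
  double count \<open>mk = n\<Delta>\<close>.\<close>

section \<open>Traces\<close>

definition mat_trace :: "'a::comm_semiring_0 mat \<Rightarrow> 'a" where
  "mat_trace A = (\<Sum>i<dim_row A. A $$ (i, i))"

lemma mat_trace_mult:
  "A \<in> carrier_mat n m \<Longrightarrow> B \<in> carrier_mat m n \<Longrightarrow>
    mat_trace (A * B) = (\<Sum>i<n. \<Sum>k<m. A $$ (i, k) * B $$ (k, i))"
  unfolding mat_trace_def by (auto simp: scalar_prod_def lessThan_atLeast0 intro!: sum.cong)

lemma mat_trace_mult_comm:
  "A \<in> carrier_mat n m \<Longrightarrow> B \<in> carrier_mat m n \<Longrightarrow> mat_trace (A * B) = mat_trace (B * A)"
  by (simp add: mat_trace_mult sum.swap[of _ "{..<n}" "{..<m}"] mult.commute)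

lemma mat_trace_smult: "A \<in> carrier_mat n n \<Longrightarrow> mat_trace (c \<cdot>\<^sub>m A) = c * mat_trace A"
  by (simp add: mat_trace_def sum_distrib_left)

lemma mat_trace_similar:
  fixes B :: "'a::comm_semiring_1 mat"
  assumes "P \<in> carrier_mat n n" "B \<in> carrier_mat n n" "Q \<in> carrier_mat n n" "Q * P = 1\<^sub>m n"
  shows "mat_trace (P * B * Q) = mat_trace B"
proof -
  have "mat_trace (P * B * Q) = mat_trace (Q * (P * B))"
    by (rule mat_trace_mult_comm) (use assms in auto)
  also have "Q * (P * B) = B"
    using assms by (simp flip: assoc_mult_mat[of Q n n P n B n])
  finally show ?thesis .
qed

lemma mat_trace_square_upper_triangular:
  fixes B :: "'a::comm_semiring_1 mat"
  assumes B: "B \<in> carrier_mat n n" and ut: "upper_triangular B"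
  shows "mat_trace (B * B) = (\<Sum>i<n. (B $$ (i, i))\<^sup>2)"
proof -
  have "(\<Sum>k<n. B $$ (i, k) * B $$ (k, i)) = (B $$ (i, i))\<^sup>2" if i: "i < n" for i
  proof -
    have "B $$ (i, k) * B $$ (k, i) = 0" if "k < n" "k \<noteq> i" for k
      using ut B i that by (cases "k < i") (auto simp: upper_triangular_def)
    hence "(\<Sum>k<n. B $$ (i, k) * B $$ (k, i)) = B $$ (i, i) * B $$ (i, i)"
      using i by (subst sum.remove[of _ i]) (auto intro!: sum.neutral)
    thus ?thesis by (simp add: power2_eq_square)
  qed
  thus ?thesis using B by (simp add: mat_trace_mult)
qed

lemma mat_trace_entrywise_sum:
  assumes "\<And>\<eta>. \<eta> \<in> E \<Longrightarrow> A \<eta> \<in> carrier_mat D D"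
  shows "mat_trace (Matrix.mat D D (\<lambda>(i, j). \<Sum>\<eta>\<in>E. A \<eta> $$ (i, j))) = (\<Sum>\<eta>\<in>E. mat_trace (A \<eta>))"
proof -
  have "mat_trace (Matrix.mat D D (\<lambda>(i, j). \<Sum>\<eta>\<in>E. A \<eta> $$ (i, j)))
      = (\<Sum>i<D. \<Sum>\<eta>\<in>E. A \<eta> $$ (i, i))"
    by (simp add: mat_trace_def)
  also have "\<dots> = (\<Sum>\<eta>\<in>E. \<Sum>i<D. A \<eta> $$ (i, i))"
    by (rule sum.swap)
  also have "\<dots> = (\<Sum>\<eta>\<in>E. mat_trace (A \<eta>))"
    using carrier_matD(1)[OF assms] by (simp add: mat_trace_def)
  finally show ?thesis .
qed

lemma mat_trace_square_entrywise_sum: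
  fixes A :: "'b \<Rightarrow> 'a::comm_semiring_0 mat"
  assumes A: "\<And>\<eta>. \<eta> \<in> E \<Longrightarrow> A \<eta> \<in> carrier_mat D D"
  defines "S \<equiv> Matrix.mat D D (\<lambda>(i, j). \<Sum>\<eta>\<in>E. A \<eta> $$ (i, j))"
  shows "mat_trace (S * S) = (\<Sum>\<eta>\<in>E. \<Sum>\<eta>'\<in>E. mat_trace (A \<eta> * A \<eta>'))"
proof -
  have "mat_trace (S * S) = (\<Sum>i<D. \<Sum>k<D. \<Sum>\<eta>\<in>E. \<Sum>\<eta>'\<in>E. A \<eta> $$ (i, k) * A \<eta>' $$ (k, i))"
    using mat_trace_mult[of S D D S] by (auto simp: S_def sum_product intro!: sum.cong)
  also have "\<dots> = (\<Sum>\<eta>\<in>E. \<Sum>\<eta>'\<in>E. \<Sum>i<D. \<Sum>k<D. A \<eta> $$ (i, k) * A \<eta>' $$ (k, i))"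
    by (simp add: sum.swap[of _ "{..<D}" E])
  also have "\<dots> = (\<Sum>\<eta>\<in>E. \<Sum>\<eta>'\<in>E. mat_trace (A \<eta> * A \<eta>'))"
    by (intro sum.cong refl) (simp add: mat_trace_mult[OF A A])
  finally show ?thesis .
qed

section \<open>Base-\<open>d\<close> digits\<close>

lemma digit_0: "digit d x 0 = x mod d"
  by (simp add: digit_def)

lemma digit_Suc: "digit d x (Suc i) = digit d (x div d) i"
  by (simp add: digit_def div_mult2_eq mult.commute)

lemma digit_less: "d \<ge> 1 \<Longrightarrow> digit d x i < d"
  by (simp add: digit_def)

lemma digit_beyond_length:
  assumes "d \<ge> 1" "x < d ^ n" "n \<le> i"
  shows "digit d x i = 0"
proof (cases "d = 1")
  case False
  hence "d ^ n \<le> d ^ i" using assms by (intro power_increasing) auto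
  thus ?thesis using assms by (simp add: digit_def)
qed (simp add: digit_def)

lemma digit_inject:
  assumes "x < d ^ n" "y < d ^ n" "\<forall>i<n. digit d x i = digit d y i"
  shows "x = y"
  using assms
proof (induction n arbitrary: x y)
  case (Suc n)
  have "x div d < d ^ n" "y div d < d ^ n"
    using Suc.prems(1,2) by (simp_all add: less_mult_imp_div_less mult.commute)
  hence "x div d = y div d"
    using Suc.prems(3) by (intro Suc.IH) (auto simp flip: digit_Suc)
  moreover have "x mod d = y mod d"
    using Suc.prems(3) by (metis digit_0 zero_less_Suc)
  ultimately show ?case by (metis div_mult_mod_eq)
qed simp

fun of_digits :: "nat \<Rightarrow> nat \<Rightarrow> (nat \<Rightarrow> nat) \<Rightarrow> nat" where
  "of_digits d 0 f = 0"
| "of_digits d (Suc n) f = f 0 + d * of_digits d n (\<lambda>i. f (Suc i))"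

lemma of_digits_less: "d \<ge> 1 \<Longrightarrow> \<forall>i<n. f i < d \<Longrightarrow> of_digits d n f < d ^ n"
proof (induction n arbitrary: f)
  case (Suc n)
  have "of_digits d n (\<lambda>i. f (Suc i)) + 1 \<le> d ^ n" using Suc by force
  hence "d * (of_digits d n (\<lambda>i. f (Suc i)) + 1) \<le> d * d ^ n" by (rule mult_le_mono2)
  moreover have "f 0 < d" using Suc by auto
  ultimately show ?case by (simp add: algebra_simps)
qed simp

lemma digit_of_digits:
  "d \<ge> 1 \<Longrightarrow> \<forall>i<n. f i < d \<Longrightarrow> i < n \<Longrightarrow> digit d (of_digits d n f) i = f i"
proof (induction n arbitrary: f i)
  case (Suc n)
  have "f 0 < d" using Suc by auto
  thus ?case using Suc by (cases i) (simp_all add: digit_0 digit_Suc)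
qed simp

definition splice_digits :: "nat \<Rightarrow> nat \<Rightarrow> nat set \<Rightarrow> nat \<Rightarrow> nat \<Rightarrow> nat" where
  "splice_digits d n S x y = of_digits d n (\<lambda>i. if i \<in> S then digit d x i else digit d y i)"

lemma splice_digits_less: "d \<ge> 1 \<Longrightarrow> splice_digits d n S x y < d ^ n"
  unfolding splice_digits_def by (rule of_digits_less) (auto simp: digit_less)

lemma digit_splice_digits:
  assumes "d \<ge> 1" "x < d ^ n" "y < d ^ n"
  shows "digit d (splice_digits d n S x y) i = (if i \<in> S then digit d x i else digit d y i)"
proof (cases "i < n")
  case True
  thus ?thesis unfolding splice_digits_def using assms(1) by (intro digit_of_digits) (auto simp: digit_less)
next
  case False
  hence "n \<le> i" by simp
  thus ?thesis
    using digit_beyond_length[OF assms(1) splice_digits_less[OF assms(1)]]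
      digit_beyond_length[OF assms(1) assms(2)] digit_beyond_length[OF assms(1) assms(3)] by simp
qed

lemma splice_digits_swap:
  assumes "d \<ge> 1" "x < d ^ n" "y < d ^ n"
  shows "splice_digits d n S (splice_digits d n S x y) (splice_digits d n S y x) = x"
  using assms by (intro digit_inject) (auto simp: splice_digits_less digit_splice_digits)

lemma splice_digits_pair_bij:
  fixes n :: nat and S :: "nat set"
  assumes "d \<ge> 1"
  defines "swap \<equiv> \<lambda>p. (splice_digits d n S (fst p) (snd p), splice_digits d n S (snd p) (fst p))"
  shows "bij_betw swap ({..<d ^ n} \<times> {..<d ^ n}) ({..<d ^ n} \<times> {..<d ^ n})"
  by (rule bij_betw_byWitness[of _ swap])
    (auto simp: swap_def splice_digits_swap[OF assms(1)] splice_digits_less[OF assms(1)])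

section \<open>Operators acting on disjoint sets of qudits\<close>

lemma acts_only_on_carrier: "acts_only_on d n S A \<Longrightarrow> A \<in> carrier_mat (d ^ n) (d ^ n)"
  by (simp add: acts_only_on_def)

lemma acts_only_on_off_support:
  "acts_only_on d n S A \<Longrightarrow> x < d ^ n \<Longrightarrow> y < d ^ n \<Longrightarrow> i < n \<Longrightarrow> i \<notin> S \<Longrightarrow>
    digit d x i \<noteq> digit d y i \<Longrightarrow> A $$ (x, y) = 0"
  unfolding acts_only_on_def by blast

lemma acts_only_on_diag:
  "acts_only_on d n S A \<Longrightarrow> x < d ^ n \<Longrightarrow> x' < d ^ n \<Longrightarrow> \<forall>i\<in>S. digit d x i = digit d x' i \<Longrightarrow>
    A $$ (x, x) = A $$ (x', x')"
  unfolding acts_only_on_def by blast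

lemma diag_mult_disjoint_support:
  assumes d: "d \<ge> 1" and A: "acts_only_on d n S A" and B: "acts_only_on d n T B"
    and ST: "S \<inter> T = {}" and x: "x < d ^ n"
  shows "(A * B) $$ (x, x) = A $$ (x, x) * B $$ (x, x)"
proof -
  have "A $$ (x, y) * B $$ (y, x) = 0" if y: "y < d ^ n" "y \<noteq> x" for y
  proof -
    obtain i where i: "i < n" "digit d x i \<noteq> digit d y i"
      using digit_inject[OF x y(1)] y(2) by auto
    show ?thesis
    proof (cases "i \<in> S")
      case False
      thus ?thesis using acts_only_on_off_support[OF A x y(1) i(1)] i(2) by simp
    next
      case True
      hence "i \<notin> T" using ST by auto
      thus ?thesis using acts_only_on_off_support[OF B y(1) x i(1)] i(2) by simp
    qed
  qed
  hence "(\<Sum>y\<in>{..<d ^ n} - {x}. A $$ (x, y) * B $$ (y, x)) = 0"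
    by (intro sum.neutral) auto
  hence "(\<Sum>y<d ^ n. A $$ (x, y) * B $$ (y, x)) = A $$ (x, x) * B $$ (x, x)"
    using sum.remove[of "{..<d ^ n}" x "\<lambda>y. A $$ (x, y) * B $$ (y, x)"] x by simp
  thus ?thesis
    using acts_only_on_carrier[OF A] acts_only_on_carrier[OF B] x
    by (simp add: scalar_prod_def lessThan_atLeast0)
qed

text \<open>The involution \<open>(x, y) \<mapsto> (splice x y, splice y x)\<close> of index pairs keeps the
  \<open>S\<close>-digits of \<open>x\<close> and the \<open>T\<close>-digits of \<open>y\<close> in its first component, which turns
  \<open>tr A \<cdot> tr B = \<Sum>\<^sub>x\<^sub>,\<^sub>y A\<^sub>x\<^sub>x B\<^sub>y\<^sub>y\<close> into \<open>D \<Sum>\<^sub>x A\<^sub>x\<^sub>x B\<^sub>x\<^sub>x\<close>.\<close>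
lemma mat_trace_mult_disjoint_support:
  assumes d: "d \<ge> 1" and A: "acts_only_on d n S A" and B: "acts_only_on d n T B"
    and ST: "S \<inter> T = {}"
  shows "of_nat (d ^ n) * mat_trace (A * B) = mat_trace A * mat_trace B"
proof -
  define D where "D = d ^ n"
  define G where "G z = A $$ (z, z) * B $$ (z, z)" for z
  define swap where "swap = (\<lambda>p. (splice_digits d n S (fst p) (snd p), splice_digits d n S (snd p) (fst p)))"
  let ?X = "{..<D} \<times> {..<D}"
  have Ac: "A \<in> carrier_mat D D" and Bc: "B \<in> carrier_mat D D"
    using acts_only_on_carrier[OF A] acts_only_on_carrier[OF B] by (simp_all add: D_def)
  have A_splice: "A $$ (splice_digits d n S x y, splice_digits d n S x y) = A $$ (x, x)"
    if "x < D" "y < D" for x y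
    by (rule acts_only_on_diag[OF A])
      (use that d in \<open>simp_all add: D_def splice_digits_less digit_splice_digits\<close>)
  have B_splice: "B $$ (splice_digits d n S x y, splice_digits d n S x y) = B $$ (y, y)"
    if "x < D" "y < D" for x y
    by (rule acts_only_on_diag[OF B])
      (use that d ST in \<open>auto simp: D_def splice_digits_less digit_splice_digits\<close>)
  have bij: "bij_betw swap ?X ?X"
    unfolding swap_def D_def by (rule splice_digits_pair_bij[OF d])
  have "mat_trace A * mat_trace B = (\<Sum>x<D. \<Sum>y<D. A $$ (x, x) * B $$ (y, y))"
    using Ac Bc by (simp add: mat_trace_def sum_product)
  also have "\<dots> = (\<Sum>p\<in>?X. A $$ (fst p, fst p) * B $$ (snd p, snd p))"
    by (simp add: sum.cartesian_product case_prod_beta)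
  also have "\<dots> = (\<Sum>p\<in>?X. G (fst (swap p)))"
    by (rule sum.cong) (auto simp: G_def swap_def A_splice B_splice)
  also have "\<dots> = (\<Sum>p\<in>?X. G (fst p))"
    using sum.reindex_bij_betw[OF bij, of "\<lambda>p. G (fst p)"] by simp
  also have "\<dots> = (\<Sum>x<D. \<Sum>y<D. G x)"
    by (simp only: sum.cartesian_product) (simp add: case_prod_beta)
  also have "\<dots> = of_nat D * (\<Sum>x<D. G x)"
    by (simp add: sum_distrib_left)
  also have "(\<Sum>x<D. G x) = mat_trace (A * B)"
    using Ac Bc diag_mult_disjoint_support[OF d A B ST] by (simp add: mat_trace_def G_def D_def)
  finally show ?thesis by (simp add: D_def)
qed

section \<open>Moments of the empirical spectral distribution\<close>

lemma hermitian_matD: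
  assumes "hermitian_mat A" "A \<in> carrier_mat D D" "i < D" "j < D"
  shows "A $$ (i, j) = cnj (A $$ (j, i))"
proof -
  have "mat_adjoint A $$ (i, j) = cnj (A $$ (j, i))"
    using assms(2-4) by (simp add: mat_adjoint_def mat_of_rows_def)
  thus ?thesis using assms(1) by (simp add: hermitian_mat_def)
qed

lemma hermitian_matI:
  assumes "A \<in> carrier_mat D D" "\<And>i j. i < D \<Longrightarrow> j < D \<Longrightarrow> A $$ (i, j) = cnj (A $$ (j, i))"
  shows "hermitian_mat A"
proof -
  have "mat_adjoint A = A"
  proof (rule eq_matI)
    fix i j assume "i < dim_row A" "j < dim_col A"
    hence ij: "i < D" "j < D" using assms(1) by auto
    thus "mat_adjoint A $$ (i, j) = A $$ (i, j)"
      using assms(1) assms(2)[OF ij] by (simp add: mat_adjoint_def mat_of_rows_def)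
  qed (use assms(1) in \<open>simp_all add: mat_adjoint_def\<close>)
  thus ?thesis using assms(1) by (simp add: hermitian_mat_def)
qed

lemma hermitian_mat_smult_entrywise_sum:
  assumes "cnj c = c" and "\<forall>\<eta>\<in>E. A \<eta> \<in> carrier_mat D D \<and> hermitian_mat (A \<eta>)"
  shows "hermitian_mat (c \<cdot>\<^sub>m Matrix.mat D D (\<lambda>(i, j). \<Sum>\<eta>\<in>E. A \<eta> $$ (i, j)))"
proof (rule hermitian_matI)
  fix i j assume ij: "i < D" "j < D"
  have "A \<eta> $$ (i, j) = cnj (A \<eta> $$ (j, i))" if "\<eta> \<in> E" for \<eta>
    using assms(2) that ij hermitian_matD by blast
  thus "(c \<cdot>\<^sub>m Matrix.mat D D (\<lambda>(i, j). \<Sum>\<eta>\<in>E. A \<eta> $$ (i, j))) $$ (i, j)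
      = cnj ((c \<cdot>\<^sub>m Matrix.mat D D (\<lambda>(i, j). \<Sum>\<eta>\<in>E. A \<eta> $$ (i, j))) $$ (j, i))"
    using ij assms(1) by (simp add: cnj_sum)
qed simp

lemma hermitian_mat_trace_real:
  assumes "hermitian_mat A" "A \<in> carrier_mat D D"
  shows "Im (mat_trace A) = 0"
proof -
  have "Im (A $$ (i, i)) = 0" if "i < D" for i
    using arg_cong[OF hermitian_matD[OF assms that that], of Im] by simp
  thus ?thesis using assms(2) by (simp add: mat_trace_def Im_sum)
qed

lemma hermitian_mat_eigenvalue_real:
  assumes herm: "hermitian_mat A" and A: "A \<in> carrier_mat D D" and ev: "eigenvalue A e"
  shows "Im e = 0"
proof -
  obtain v where v: "v \<in> carrier_vec D" "v \<noteq> 0\<^sub>v D" "A *\<^sub>v v = e \<cdot>\<^sub>v v"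
    using ev A unfolding eigenvalue_def eigenvector_def by auto
  define s where "s = (\<Sum>i<D. cnj (v $ i) * (\<Sum>j<D. A $$ (i, j) * v $ j))"
  define N where "N = (\<Sum>i<D. (cmod (v $ i))\<^sup>2)"
  have "(\<Sum>j<D. A $$ (i, j) * v $ j) = e * v $ i" if "i < D" for i
    using arg_cong[OF v(3), of "\<lambda>w. w $ i"] A v(1) that
    by (simp add: scalar_prod_def lessThan_atLeast0)
  hence "s = e * of_real N"
    by (simp add: s_def N_def sum_distrib_left complex_norm_square mult_ac flip: of_real_power)
  moreover have "cnj s = s"
  proof -
    have "cnj (A $$ (i, j)) = A $$ (j, i)" if "i < D" "j < D" for i j
      using hermitian_matD[OF herm A that(2,1)] by simp
    hence "cnj s = (\<Sum>i<D. \<Sum>j<D. v $ i * (A $$ (j, i) * cnj (v $ j)))"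
      by (simp add: s_def sum_distrib_left)
    also have "\<dots> = (\<Sum>j<D. \<Sum>i<D. v $ i * (A $$ (j, i) * cnj (v $ j)))"
      by (rule sum.swap)
    finally show ?thesis by (simp add: s_def sum_distrib_left mult_ac)
  qed
  moreover have "N > 0"
  proof -
    obtain i where i: "i < D" "v $ i \<noteq> 0"
      using v(1,2) by (metis carrier_vecD eq_vecI index_zero_vec(1,2))
    have "(cmod (v $ i))\<^sup>2 \<le> N"
      unfolding N_def by (rule member_le_sum) (use i in auto)
    moreover have "(cmod (v $ i))\<^sup>2 > 0" using i(2) by simp
    ultimately show ?thesis by linarith
  qed
  ultimately have "cnj e * of_real N = e * of_real N"
    by (metis complex_cnj_complex_of_real complex_cnj_mult)
  hence "cnj e = e" using \<open>N > 0\<close> by simp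
  from arg_cong[OF this, of Im] show ?thesis by simp
qed

lemma proots_prod_linear_factors: "proots (\<Prod>e\<leftarrow>es. [:- e, 1:]) = mset (es :: complex list)"
proof (induction es)
  case (Cons a es)
  have "(\<Prod>e\<leftarrow>es. [:- e, 1:]) \<noteq> (0::complex poly)"
    by (auto simp: prod_list_zero_iff)
  hence "proots ([:- a, 1:] * (\<Prod>e\<leftarrow>es. [:- e, 1:]))
      = proots [:- a, 1:] + proots (\<Prod>e\<leftarrow>es. [:- e, 1:])"
    by (intro proots_mult) simp_all
  hence "proots (\<Prod>e\<leftarrow>a # es. [:- e, 1:]) = proots [:- a, 1:] + proots (\<Prod>e\<leftarrow>es. [:- e, 1:])"
    by simp
  also have "proots [:- a, 1:] = {#a#}"
    by (metis minus_minus proots_linear_factor)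
  finally show ?case using Cons.IH by simp
qed simp

lemma mat_trace_eigenvalue_sums:
  fixes A :: "complex mat"
  assumes A: "A \<in> carrier_mat D D" and cp: "char_poly A = (\<Prod>e\<leftarrow>es. [:- e, 1:])"
  shows "mat_trace A = sum_list es" and "mat_trace (A * A) = sum_list (map (\<lambda>e. e\<^sup>2) es)"
proof -
  obtain B P Q where "schur_decomposition A es = (B, P, Q)"
    by (metis prod_cases3)
  from schur_decomposition[OF A cp this] A
  have B: "B \<in> carrier_mat D D" and P: "P \<in> carrier_mat D D" and Q: "Q \<in> carrier_mat D D"
    and QP: "Q * P = 1\<^sub>m D" and APBQ: "A = P * B * Q"
    and ut: "upper_triangular B" and es: "diag_mat B = es"
    unfolding similar_mat_wit_def Let_def by auto
  have len: "length es = D" and diag: "\<And>i. i < D \<Longrightarrow> B $$ (i, i) = es ! i"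
    using es B by (auto simp: diag_mat_def)
  have "mat_trace A = mat_trace B"
    using APBQ mat_trace_similar[OF P B Q QP] by simp
  thus "mat_trace A = sum_list es"
    using B len diag by (simp add: mat_trace_def sum_list_sum_nth lessThan_atLeast0)
  have "A * A = P * (B * ((Q * P) * (B * Q)))"
    using APBQ P B Q by (simp add: assoc_mult_mat[of _ D D _ D _ D])
  also have "\<dots> = P * (B * B) * Q"
    using P B Q QP by (simp add: assoc_mult_mat[of _ D D _ D _ D])
  finally have "A * A = P * (B * B) * Q" .
  hence "mat_trace (A * A) = mat_trace (B * B)"
    using mat_trace_similar[OF P _ Q QP, of "B * B"] B by simp
  thus "mat_trace (A * A) = sum_list (map (\<lambda>e. e\<^sup>2) es)"
    using mat_trace_square_upper_triangular[OF B ut] len diag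
    by (simp add: sum_list_sum_nth lessThan_atLeast0)
qed

lemma sum_list_map_eq_sum_count_real:
  "finite X \<Longrightarrow> set xs \<subseteq> X \<Longrightarrow> sum_list (map f xs) = (\<Sum>x\<in>X. real (count_list xs x) * (f x :: real))"
proof (induction xs)
  case (Cons a xs)
  have "(\<Sum>x\<in>X. real (count_list (a # xs) x) * f x)
      = (\<Sum>x\<in>X. (if a = x then f x else 0) + real (count_list xs x) * f x)"
    by (rule sum.cong) (auto simp: distrib_right)
  also have "\<dots> = (\<Sum>x\<in>X. (if a = x then f x else 0)) + (\<Sum>x\<in>X. real (count_list xs x) * f x)"
    by (rule sum.distrib)
  also have "(\<Sum>x\<in>X. (if a = x then f x else 0)) = f a"
    using Cons.prems by (simp add: sum.delta)
  finally show ?case using Cons by simp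
qed simp

lemma expectation_pmf_of_multiset_mset:
  assumes "xs \<noteq> []"
  shows "measure_pmf.expectation (pmf_of_multiset (mset xs)) f = sum_list (map f xs) / length xs"
proof -
  have "measure_pmf.expectation (pmf_of_multiset (mset xs)) f
      = (\<Sum>a\<in>set xs. pmf (pmf_of_multiset (mset xs)) a *\<^sub>R f a)"
    by (rule integral_measure_pmf) (use assms in auto)
  also have "\<dots> = (\<Sum>a\<in>set xs. real (count_list xs a) * f a) / length xs"
    using assms by (simp add: sum_divide_distrib count_mset)
  finally show ?thesis by (simp add: sum_list_map_eq_sum_count_real[of "set xs"])
qed

lemma esd_moments:
  assumes herm: "hermitian_mat h" and h: "h \<in> carrier_mat D D" and D: "D > 0"
  shows "measure_pmf.expectation (esd h) (\<lambda>t. t\<^sup>2) = Re (mat_trace (h * h)) / D"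
    and "measure_pmf.expectation (esd h) (\<lambda>t. t) = Re (mat_trace h) / D"
proof -
  obtain es where cp: "char_poly h = (\<Prod>e\<leftarrow>es. [:- e, 1:])" and len: "length es = D"
    using char_poly_factorized[OF h] by blast
  have "eigenvalue h e" if "e \<in> set es" for e
    using eigenvalue_root_char_poly[OF h] cp that
    by (simp add: poly_prod_list prod_list_zero_iff)
  hence real: "Im e = 0" if "e \<in> set es" for e
    using hermitian_mat_eigenvalue_real[OF herm h] that by blast
  have esd: "esd h = pmf_of_multiset (mset (map Re es))"
    by (simp add: esd_def eigenvalues_mset_def cp proots_prod_linear_factors)
  have ne: "map Re es \<noteq> []" using len D by auto
  have "Re (sum_list (map (\<lambda>e. e\<^sup>2) es)) = sum_list (map (\<lambda>e. (Re e)\<^sup>2) es)"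
    using real by (induction es) (simp_all add: power2_eq_square)
  thus "measure_pmf.expectation (esd h) (\<lambda>t. t\<^sup>2) = Re (mat_trace (h * h)) / D"
    unfolding esd expectation_pmf_of_multiset_mset[OF ne] mat_trace_eigenvalue_sums[OF h cp]
    using len by (simp add: comp_def)
  have "Re (sum_list es) = sum_list (map Re es)"
    by (induction es) simp_all
  thus "measure_pmf.expectation (esd h) (\<lambda>t. t) = Re (mat_trace h) / D"
    unfolding esd expectation_pmf_of_multiset_mset[OF ne] mat_trace_eigenvalue_sums[OF h cp]
    using len by simp
qed

text \<open>\<open>D\<^sup>2\<close> times the covariance \<open>\<tau>(AB) - \<tau>(A)\<tau>(B)\<close> for the normalised trace \<open>\<tau> = tr/D\<close>.\<close>
definition trace_covariance :: "complex mat \<Rightarrow> complex mat \<Rightarrow> real" where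
  "trace_covariance A B =
     real (dim_row A) * Re (mat_trace (A * B)) - Re (mat_trace A) * Re (mat_trace B)"

lemma esd_variance_mean_of_hermitians:
  assumes E: "finite E" "E \<noteq> {}" and D: "D > 0"
    and A: "\<forall>\<eta>\<in>E. A \<eta> \<in> carrier_mat D D \<and> hermitian_mat (A \<eta>)"
    and h: "h = (1 / of_nat (card E)) \<cdot>\<^sub>m Matrix.mat D D (\<lambda>(i, j). \<Sum>\<eta>\<in>E. A \<eta> $$ (i, j))"
  shows "(\<integral>t. t\<^sup>2 \<partial>measure_pmf (esd h)) - (\<integral>t. t \<partial>measure_pmf (esd h))\<^sup>2
    = (\<Sum>\<eta>\<in>E. \<Sum>\<eta>'\<in>E. trace_covariance (A \<eta>) (A \<eta>')) / (real (card E) ^ 2 * real D ^ 2)"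
proof -
  define m where "m = card E"
  define S where "S = Matrix.mat D D (\<lambda>(i, j). \<Sum>\<eta>\<in>E. A \<eta> $$ (i, j))"
  define SR where "SR = (\<Sum>\<eta>\<in>E. Re (mat_trace (A \<eta>)))"
  define SP where "SP = (\<Sum>\<eta>\<in>E. \<Sum>\<eta>'\<in>E. Re (mat_trace (A \<eta> * A \<eta>')))"
  have m: "m > 0" using E by (simp add: m_def card_gt_0_iff)
  have Ac: "\<And>\<eta>. \<eta> \<in> E \<Longrightarrow> A \<eta> \<in> carrier_mat D D" using A by blast
  have Sc: "S \<in> carrier_mat D D" by (simp add: S_def)
  have h_S: "h = (1 / of_nat m) \<cdot>\<^sub>m S" by (simp add: h S_def m_def)
  have hc: "h \<in> carrier_mat D D" using Sc by (simp add: h_S)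
  have "hermitian_mat h"
    unfolding h by (rule hermitian_mat_smult_entrywise_sum) (use A in auto)
  note moments = esd_moments[OF this hc D]
  have "mat_trace h = (1 / of_nat m) * mat_trace S"
    by (simp add: h_S mat_trace_smult[OF Sc])
  hence tr_h: "Re (mat_trace h) = SR / m"
    using mat_trace_entrywise_sum[of E A D, OF Ac]
    by (simp add: S_def SR_def Re_sum)
  have tr_hh: "Re (mat_trace (h * h)) = SP / m\<^sup>2"
  proof -
    have "h * h = (1 / of_nat m) \<cdot>\<^sub>m ((1 / of_nat m) \<cdot>\<^sub>m (S * S))"
      using Sc by (simp add: h_S mult_smult_assoc_mat[of _ D D] mult_smult_distrib[of _ D D])
    hence "mat_trace (h * h) = (1 / of_nat m) * ((1 / of_nat m) * mat_trace (S * S))"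
      using Sc by (simp add: mat_trace_smult[of _ D])
    thus ?thesis
      using mat_trace_square_entrywise_sum[of E A D, OF Ac]
      by (simp add: S_def SP_def Re_sum power2_eq_square)
  qed
  have cov: "(\<Sum>\<eta>\<in>E. \<Sum>\<eta>'\<in>E. trace_covariance (A \<eta>) (A \<eta>')) = real D * SP - SR\<^sup>2"
  proof -
    have "SR\<^sup>2 = (\<Sum>\<eta>\<in>E. \<Sum>\<eta>'\<in>E. Re (mat_trace (A \<eta>)) * Re (mat_trace (A \<eta>')))"
      by (simp add: SR_def power2_eq_square sum_product)
    moreover have "dim_row (A \<eta>) = D" if "\<eta> \<in> E" for \<eta>
      using Ac[OF that] by simp
    ultimately show ?thesis
      by (simp add: trace_covariance_def SP_def sum_subtractf sum_distrib_left)
  qed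
  have E2: "(\<integral>t. t\<^sup>2 \<partial>measure_pmf (esd h)) = SP / (real m ^ 2 * real D)"
    using moments(1) tr_hh by simp
  have E1: "(\<integral>t. t \<partial>measure_pmf (esd h)) = SR / (real m * real D)"
    using moments(2) tr_h by simp
  show ?thesis
    unfolding E2 E1 cov m_def[symmetric] using m D by (simp add: field_simps power2_eq_square)
qed

section \<open>Bounds from the operator norm\<close>

lemma vec_norm_le_sum_cmod: "vec_norm v \<le> (\<Sum>i<dim_vec v. cmod (v $ i))"
proof -
  have "vec_norm v = L2_set (\<lambda>i. cmod (v $ i)) {..<dim_vec v}"
    by (simp add: vec_norm_def L2_set_def)
  also have "\<dots> \<le> (\<Sum>i<dim_vec v. cmod (v $ i))"
    by (rule L2_set_le_sum) auto
  finally show ?thesis .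
qed

lemma cmod_le_vec_norm:
  assumes "i < dim_vec v"
  shows "cmod (v $ i) \<le> vec_norm v"
proof -
  have "(cmod (v $ i))\<^sup>2 \<le> (\<Sum>i<dim_vec v. (cmod (v $ i))\<^sup>2)"
    by (rule member_le_sum) (use assms in auto)
  thus ?thesis unfolding vec_norm_def by (simp add: real_le_rsqrt)
qed

lemma vec_norm_mult_le_op_norm:
  assumes A: "A \<in> carrier_mat nr nc" and v: "v \<in> carrier_vec nc" "vec_norm v \<le> 1"
  shows "vec_norm (A *\<^sub>v v) \<le> op_norm A"
proof -
  let ?M = "\<Sum>i<nr. \<Sum>j<nc. cmod (A $$ (i, j))"
  have "vec_norm (A *\<^sub>v w) \<le> ?M" if w: "w \<in> carrier_vec nc" "vec_norm w \<le> 1" for w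
  proof -
    have "cmod ((A *\<^sub>v w) $ i) \<le> (\<Sum>j<nc. cmod (A $$ (i, j)))" if i: "i < nr" for i
    proof -
      have "cmod ((A *\<^sub>v w) $ i) \<le> (\<Sum>j<nc. cmod (A $$ (i, j)) * cmod (w $ j))"
        using A w(1) i norm_sum[of "\<lambda>j. A $$ (i, j) * w $ j" "{..<nc}"]
        by (simp add: scalar_prod_def lessThan_atLeast0 norm_mult)
      also have "\<dots> \<le> (\<Sum>j<nc. cmod (A $$ (i, j)))"
      proof (intro sum_mono)
        fix j assume "j \<in> {..<nc}"
        hence "cmod (w $ j) \<le> 1" using cmod_le_vec_norm[of j w] w by auto
        thus "cmod (A $$ (i, j)) * cmod (w $ j) \<le> cmod (A $$ (i, j))" by (simp add: mult_left_le)
      qed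
      finally show ?thesis .
    qed
    hence "(\<Sum>i<nr. cmod ((A *\<^sub>v w) $ i)) \<le> ?M" by (intro sum_mono) auto
    thus ?thesis using vec_norm_le_sum_cmod[of "A *\<^sub>v w"] A by simp
  qed
  hence "bdd_above ((\<lambda>v. vec_norm (A *\<^sub>v v)) ` {v. v \<in> carrier_vec (dim_col A) \<and> vec_norm v \<le> 1})"
    using A by (intro bdd_aboveI[of _ ?M]) auto
  thus ?thesis unfolding op_norm_def by (rule cSUP_upper[rotated]) (use v A in auto)
qed

lemma column_sum_sq_le_one:
  assumes A: "A \<in> carrier_mat D D" and nA: "op_norm A \<le> 1" and j: "j < D"
  shows "(\<Sum>i<D. (cmod (A $$ (i, j)))\<^sup>2) \<le> 1"
proof -
  let ?u = "unit_vec D j :: complex Matrix.vec"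
  have "(\<Sum>i<D. (cmod (?u $ i))\<^sup>2) = (\<Sum>i<D. if i = j then 1 else 0)"
    by (rule sum.cong) (auto simp: unit_vec_def)
  also have "\<dots> = 1" using j by simp
  finally have "vec_norm ?u = 1" by (simp add: vec_norm_def)
  hence "vec_norm (A *\<^sub>v ?u) \<le> 1"
    using vec_norm_mult_le_op_norm[OF A, of ?u] nA by simp
  moreover have "vec_norm (A *\<^sub>v ?u) = sqrt (\<Sum>i<D. (cmod (A $$ (i, j)))\<^sup>2)"
    using A j by (simp add: vec_norm_def)
  ultimately show ?thesis by simp
qed

lemma sum_sq_entries_le:
  assumes "A \<in> carrier_mat D D" "op_norm A \<le> 1"
  shows "(\<Sum>i<D. \<Sum>j<D. (cmod (A $$ (i, j)))\<^sup>2) \<le> D"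
proof -
  have "(\<Sum>i<D. \<Sum>j<D. (cmod (A $$ (i, j)))\<^sup>2) = (\<Sum>j<D. \<Sum>i<D. (cmod (A $$ (i, j)))\<^sup>2)"
    by (rule sum.swap)
  also have "\<dots> \<le> (\<Sum>j<D. 1)"
    using column_sum_sq_le_one[OF assms] by (intro sum_mono) auto
  finally show ?thesis by simp
qed

lemma cmod_mat_trace_mult_le:
  assumes A: "A \<in> carrier_mat D D" "op_norm A \<le> 1"
    and B: "B \<in> carrier_mat D D" "op_norm B \<le> 1"
  shows "cmod (mat_trace (A * B)) \<le> D"
proof -
  have am_gm: "x * y \<le> (x\<^sup>2 + y\<^sup>2) / 2" for x y :: real
    using sum_squares_bound[of x y] by simp
  have "cmod (mat_trace (A * B)) \<le> (\<Sum>i<D. \<Sum>k<D. cmod (A $$ (i, k)) * cmod (B $$ (k, i)))"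
    using mat_trace_mult[OF A(1) B(1)]
    by (auto simp: norm_mult intro!: order.trans[OF norm_sum] sum_mono)
  also have "\<dots> \<le> (\<Sum>i<D. \<Sum>k<D. ((cmod (A $$ (i, k)))\<^sup>2 + (cmod (B $$ (k, i)))\<^sup>2) / 2)"
    by (intro sum_mono am_gm)
  also have "\<dots> = ((\<Sum>i<D. \<Sum>k<D. (cmod (A $$ (i, k)))\<^sup>2)
                   + (\<Sum>i<D. \<Sum>k<D. (cmod (B $$ (k, i)))\<^sup>2)) / 2"
    by (simp add: sum.distrib add_divide_distrib sum_divide_distrib)
  also have "(\<Sum>i<D. \<Sum>k<D. (cmod (B $$ (k, i)))\<^sup>2) = (\<Sum>k<D. \<Sum>i<D. (cmod (B $$ (k, i)))\<^sup>2)"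
    by (rule sum.swap)
  also have "((\<Sum>i<D. \<Sum>k<D. (cmod (A $$ (i, k)))\<^sup>2)
              + (\<Sum>k<D. \<Sum>i<D. (cmod (B $$ (k, i)))\<^sup>2)) / 2 \<le> (D + D) / 2"
    using sum_sq_entries_le[OF A] sum_sq_entries_le[OF B] by (intro divide_right_mono add_mono) auto
  finally show ?thesis by simp
qed

lemma cmod_mat_trace_le:
  assumes A: "A \<in> carrier_mat D D" "op_norm A \<le> 1"
  shows "cmod (mat_trace A) \<le> D"
proof -
  have "cmod (A $$ (i, i)) \<le> 1" if i: "i < D" for i
  proof -
    have "(cmod (A $$ (i, i)))\<^sup>2 \<le> (\<Sum>k<D. (cmod (A $$ (k, i)))\<^sup>2)"
      by (rule member_le_sum) (use i in auto)
    also have "\<dots> \<le> 1" by (rule column_sum_sq_le_one[OF A i])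
    finally show ?thesis by (simp add: power_le_one_iff)
  qed
  hence "(\<Sum>i<D. cmod (A $$ (i, i))) \<le> D"
    using sum_mono[of "{..<D}" "\<lambda>i. cmod (A $$ (i, i))" "\<lambda>_. 1"] by simp
  thus ?thesis using A(1) norm_sum[of "\<lambda>i. A $$ (i, i)" "{..<D}"] by (simp add: mat_trace_def)
qed

lemma trace_covariance_le:
  assumes "A \<in> carrier_mat D D" "op_norm A \<le> 1" "B \<in> carrier_mat D D" "op_norm B \<le> 1"
  shows "trace_covariance A B \<le> 2 * real D ^ 2"
proof -
  have "real D * Re (mat_trace (A * B)) \<le> real D * real D"
    using abs_Re_le_cmod[of "mat_trace (A * B)"] cmod_mat_trace_mult_le[OF assms]
    by (intro mult_left_mono) auto
  moreover have "- (Re (mat_trace A) * Re (mat_trace B)) \<le> \<bar>Re (mat_trace A)\<bar> * \<bar>Re (mat_trace B)\<bar>"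
    using abs_ge_minus_self[of "Re (mat_trace A) * Re (mat_trace B)"] by (simp add: abs_mult)
  moreover have "\<bar>Re (mat_trace A)\<bar> * \<bar>Re (mat_trace B)\<bar> \<le> real D * real D"
    using abs_Re_le_cmod[of "mat_trace A"] abs_Re_le_cmod[of "mat_trace B"]
      cmod_mat_trace_le[OF assms(1,2)] cmod_mat_trace_le[OF assms(3,4)]
    by (intro mult_mono) auto
  ultimately show ?thesis
    using assms(1) by (simp add: trace_covariance_def power2_eq_square)
qed

lemma trace_covariance_disjoint_support:
  assumes "d \<ge> 1" "acts_only_on d n S A" "acts_only_on d n T B" "S \<inter> T = {}"
    and "hermitian_mat A"
  shows "trace_covariance A B = 0"
proof -
  have A: "A \<in> carrier_mat (d ^ n) (d ^ n)"
    using acts_only_on_carrier[OF assms(2)] .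
  hence "Im (mat_trace A) = 0"
    using hermitian_mat_trace_real assms(5) by blast
  moreover have "Re (of_nat (d ^ n) * mat_trace (A * B)) = Re (mat_trace A * mat_trace B)"
    using mat_trace_mult_disjoint_support[OF assms(1-4)] by simp
  ultimately show ?thesis
    using A by (simp add: trace_covariance_def)
qed

section \<open>Counting in a regular uniform hypergraph\<close>

lemma card_edges_mult_uniformity:
  assumes "finite V" "finite E" "\<forall>\<eta>\<in>E. \<eta> \<subseteq> V \<and> card \<eta> = k"
    and "\<forall>v\<in>V. card {\<eta>\<in>E. v \<in> \<eta>} = \<Delta>"
  shows "card E * k = card V * \<Delta>"
proof -
  have "card V * \<Delta> = (\<Sum>v\<in>V. \<Sum>\<eta>\<in>E. if v \<in> \<eta> then 1 else 0)"
    using assms(4) by (simp add: sum.inter_filter[OF assms(2), symmetric])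
  also have "\<dots> = (\<Sum>\<eta>\<in>E. \<Sum>v\<in>V. if v \<in> \<eta> then 1 else 0)"
    by (rule sum.swap)
  also have "\<dots> = (\<Sum>\<eta>\<in>E. card {v\<in>V. v \<in> \<eta>})"
    by (intro sum.cong refl) (simp add: sum.inter_filter[OF assms(1), symmetric])
  also have "\<dots> = (\<Sum>\<eta>\<in>E. k)"
  proof (intro sum.cong refl)
    fix \<eta> assume "\<eta> \<in> E"
    hence "{v\<in>V. v \<in> \<eta>} = \<eta>" "card \<eta> = k" using assms(3) by auto
    thus "card {v\<in>V. v \<in> \<eta>} = k" by simp
  qed
  finally show ?thesis by simp
qed

lemma sum_pairs_le_intersecting_bound:
  fixes c :: "'a set \<Rightarrow> 'a set \<Rightarrow> real" and C :: real
  assumes "finite V" "finite E" "\<forall>\<eta>\<in>E. \<eta> \<subseteq> V \<and> card \<eta> = k"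
    and "\<forall>v\<in>V. card {\<eta>\<in>E. v \<in> \<eta>} \<le> \<Delta>"
    and "C \<ge> 0" "\<forall>\<eta>\<in>E. \<forall>\<eta>'\<in>E. c \<eta> \<eta>' \<le> C"
    and "\<forall>\<eta>\<in>E. \<forall>\<eta>'\<in>E. \<eta> \<inter> \<eta>' = {} \<longrightarrow> c \<eta> \<eta>' \<le> 0"
  shows "(\<Sum>\<eta>\<in>E. \<Sum>\<eta>'\<in>E. c \<eta> \<eta>') \<le> card E * k * \<Delta> * C"
proof -
  let ?meet = "\<lambda>\<eta> \<eta>'. \<Sum>v\<in>\<eta>. if v \<in> \<eta>' then C else 0"
  have fin: "finite \<eta>" if "\<eta> \<in> E" for \<eta>
    using assms(1,3) that finite_subset by blast
  have c_le: "c \<eta> \<eta>' \<le> ?meet \<eta> \<eta>'" if "\<eta> \<in> E" "\<eta>' \<in> E" for \<eta> \<eta>'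
  proof (cases "\<eta> \<inter> \<eta>' = {}")
    case True
    hence "c \<eta> \<eta>' \<le> 0" using assms(7) that by blast
    also have "0 \<le> ?meet \<eta> \<eta>'" using assms(5) by (intro sum_nonneg) simp
    finally show ?thesis .
  next
    case False
    then obtain v where "v \<in> \<eta>" "v \<in> \<eta>'" by auto
    hence "C \<le> ?meet \<eta> \<eta>'"
      using member_le_sum[of v \<eta> "\<lambda>v. if v \<in> \<eta>' then C else 0"] fin[OF that(1)] assms(5) by simp
    moreover have "c \<eta> \<eta>' \<le> C" using assms(6) that by blast
    ultimately show ?thesis by linarith
  qed
  have "(\<Sum>\<eta>\<in>E. \<Sum>\<eta>'\<in>E. c \<eta> \<eta>') \<le> (\<Sum>\<eta>\<in>E. \<Sum>\<eta>'\<in>E. ?meet \<eta> \<eta>')"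
    by (intro sum_mono c_le)
  also have "\<dots> = (\<Sum>\<eta>\<in>E. \<Sum>v\<in>\<eta>. \<Sum>\<eta>'\<in>E. if v \<in> \<eta>' then C else 0)"
    by (intro sum.cong refl, rule sum.swap)
  also have "\<dots> \<le> (\<Sum>\<eta>\<in>E. \<Sum>v\<in>\<eta>. \<Delta> * C)"
  proof (intro sum_mono)
    fix \<eta> v assume "\<eta> \<in> E" "v \<in> \<eta>"
    hence "card {\<eta>'\<in>E. v \<in> \<eta>'} \<le> \<Delta>" using assms(3,4) by blast
    thus "(\<Sum>\<eta>'\<in>E. if v \<in> \<eta>' then C else 0) \<le> \<Delta> * C"
      using assms(2,5) by (simp add: sum.inter_filter[symmetric] mult_right_mono)
  qed
  also have "\<dots> = (\<Sum>\<eta>\<in>E. k * \<Delta> * C)"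
    using assms(3) by (intro sum.cong refl) simp
  finally show ?thesis by simp
qed

lemma uniform_regular_ratio:
  assumes "finite E" "E \<noteq> {}" "\<forall>\<eta>\<in>E. \<eta> \<subseteq> {..<n} \<and> card \<eta> = k"
    and "\<forall>v<n. card {\<eta>\<in>E. v \<in> \<eta>} = \<Delta>"
  shows "real k * real \<Delta> / real (card E) = real k ^ 2 / real n"
proof (cases "n = 0")
  case True
  hence "k = 0" using assms(2,3) by fastforce
  thus ?thesis by simp
next
  case False
  have "real (card E) * real k = real n * real \<Delta>"
    using card_edges_mult_uniformity[OF _ assms(1,3)] assms(4) by (simp flip: of_nat_mult)
  thus ?thesis using assms(1,2) False by (simp add: field_simps power2_eq_square)
qed

lemma sum_trace_covariance_local_le:
  fixes E :: "nat set set" and H :: "nat set \<Rightarrow> complex mat"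
  assumes d: "d \<ge> 1" and E: "finite E" and edges: "\<forall>\<eta>\<in>E. \<eta> \<subseteq> {..<n} \<and> card \<eta> = k"
    and degree: "\<forall>v<n. card {\<eta>\<in>E. v \<in> \<eta>} \<le> \<Delta>"
    and herm: "\<forall>\<eta>\<in>E. hermitian_mat (H \<eta>)" and local: "\<forall>\<eta>\<in>E. acts_only_on d n \<eta> (H \<eta>)"
    and bounded: "\<forall>\<eta>\<in>E. op_norm (H \<eta>) \<le> 1"
  shows "(\<Sum>\<eta>\<in>E. \<Sum>\<eta>'\<in>E. trace_covariance (H \<eta>) (H \<eta>'))
    \<le> real (card E * k * \<Delta>) * (2 * real (d ^ n) ^ 2)"
proof (rule sum_pairs_le_intersecting_bound[OF finite_lessThan E edges])
  show "\<forall>\<eta>\<in>E. \<forall>\<eta>'\<in>E. trace_covariance (H \<eta>) (H \<eta>') \<le> 2 * real (d ^ n) ^ 2"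
    using local bounded acts_only_on_carrier by (blast intro: trace_covariance_le)
  show "\<forall>\<eta>\<in>E. \<forall>\<eta>'\<in>E. \<eta> \<inter> \<eta>' = {} \<longrightarrow> trace_covariance (H \<eta>) (H \<eta>') \<le> 0"
  proof (intro ballI impI)
    fix \<eta> \<eta>' assume \<eta>: "\<eta> \<in> E" "\<eta>' \<in> E" and disj: "\<eta> \<inter> \<eta>' = {}"
    show "trace_covariance (H \<eta>) (H \<eta>') \<le> 0"
      using trace_covariance_disjoint_support[OF d local[rule_format, OF \<eta>(1)]
          local[rule_format, OF \<eta>(2)] disj herm[rule_format, OF \<eta>(1)]] by simp
  qed
qed (use degree in auto)

theorem mainTheorem5:
  fixes n d k \<Delta> :: nat
    and E :: "nat set set"
    and Hloc :: "nat set \<Rightarrow> complex mat"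
  assumes d_pos: "d \<ge> 1"
    and E_fin: "finite E"
    and m_pos: "card E \<ge> 1"
    and edges: "\<forall>\<eta>\<in>E. \<eta> \<subseteq> {..<n} \<and> card \<eta> = k"
    and regular: "\<forall>v<n. card {\<eta>\<in>E. v \<in> \<eta>} = \<Delta>"
    and herm: "\<forall>\<eta>\<in>E. hermitian_mat (Hloc \<eta>)"
    and local: "\<forall>\<eta>\<in>E. acts_only_on d n \<eta> (Hloc \<eta>)"
    and bounded: "\<forall>\<eta>\<in>E. op_norm (Hloc \<eta>) \<le> 1"
  shows "let H = Matrix.mat (d ^ n) (d ^ n) (\<lambda>(i, j). \<Sum>\<eta>\<in>E. Hloc \<eta> $$ (i, j));
             h = (1 / of_nat (card E)) \<cdot>\<^sub>m H;
             \<nu> = measure_pmf (esd h)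
         in (\<integral>t. t ^ 2 \<partial>\<nu>) - (\<integral>t. t \<partial>\<nu>) ^ 2 \<le> 4 * real k ^ 2 / real n"
proof -
  define D m where "D = d ^ n" and "m = card E"
  have E_ne: "E \<noteq> {}" and m: "m > 0" using m_pos by (auto simp: m_def)
  have D: "D > 0" using d_pos by (simp add: D_def)
  have "\<forall>\<eta>\<in>E. Hloc \<eta> \<in> carrier_mat D D \<and> hermitian_mat (Hloc \<eta>)"
    using local herm acts_only_on_carrier by (auto simp: D_def)
  note variance = esd_variance_mean_of_hermitians[OF E_fin E_ne D this refl]
  have "(\<Sum>\<eta>\<in>E. \<Sum>\<eta>'\<in>E. trace_covariance (Hloc \<eta>) (Hloc \<eta>')) / (real m ^ 2 * real D ^ 2)
      \<le> real (m * k * \<Delta>) * (2 * real D ^ 2) / (real m ^ 2 * real D ^ 2)"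
    using sum_trace_covariance_local_le[OF d_pos E_fin edges _ herm local bounded] regular
    by (intro divide_right_mono) (simp_all add: D_def m_def)
  also have "\<dots> = 2 * (real k * real \<Delta> / real m)"
    using m D by (simp add: field_simps power2_eq_square)
  also have "\<dots> = 2 * real k ^ 2 / real n"
    using uniform_regular_ratio[OF E_fin E_ne edges regular] by (simp add: m_def)
  also have "\<dots> \<le> 4 * real k ^ 2 / real n"
    by (simp add: divide_right_mono)
  finally show ?thesis
    using variance by (simp add: Let_def D_def m_def)
qed

end
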